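(* Let $P$ be a poset, $\mathcal F$ a standard collection of upsets and $\mathcal I$ a standard collection of downsets of $P$ (treated as disjoint sets), and suppose there exists a canonical extension $e:P\to C$ of $P$ with respect to $(\mathcal F,\mathcal I)$. Order $\mathcal F$ by reverse inclusion and $\mathcal I$ by inclusion, let $e_{\mathcal F}(p)=p^\uparrow$ and $e_{\mathcal I}(p)=p^\downarrow$, and let $R_l\subseteq\mathcal F\times\mathcal I$ be defined by $F\,R_l\,I$ iff $e_{\mathcal F}^{-1}(F^\uparrow)\cap e_{\mathcal I}^{-1}(I^\downarrow)\ne\emptyset$ (equivalently, $F\cap I\neq\emptyset$). Then $(e_{\mathcal F},e_{\mathcal I},R_l)$ is a Galois polarity.
   Context: For an element $q$ of a poset, $q^\uparrow=\{q'\ge q\}$, $q^\downarrow=\{q'\le q\}$; $e^{-1}(Z)=\{p:e(p)\in Z\}$. A collection of upsets (downsets) of $P$ is standard if it contains all $p^\uparrow$ (all $p^\downarrow$). A completion is an order-embedding into a complete lattice. A canonical extension of $P$ w.r.t. $(\mathcal F,\mathcal I)$ is a completion $e:P\to C$ such that every $z\in C$ satisfies $z=\bigvee\{\bigwedge e[F]:F\in\mathcal F,\bigwedge e[F]\le z\}=\bigwedge\{\bigvee e[I]:I\in\mathcal I,\bigvee e[I]\ge z\}$, and such that $\bigwedge e[F]\le\bigvee e[I]$ with $F\in\mathcal F,I\in\mathcal I$ implies $F\cap I\ne\emptyset$. A meet-extension is an order-embedding $e:P\to X$ with $x=\bigwedge e[e^{-1}(x^\uparrow)]$ for all $x$; a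 join-extension dually. A Galois polarity is a triple $(e_X,e_Y,R)$ where $e_X:P\to X$ is a meet-extension, $e_Y:P\to Y$ a join-extension, $X,Y$ disjoint, $R\subseteq X\times Y$, such that there is a quasiorder $\preceq$ on $X\cup Y$ with: for $x\in X,y\in Y$, $x\preceq y$ iff $xRy$; and, writing $X\uplus_\preceq Y$ for the poset induced by $\preceq$ and $\iota_X,\iota_Y$ for the maps induced by inclusion, $\iota_X$ and $\iota_Y$ are order-embeddings, $\iota_X\circ e_X=\iota_Y\circ e_Y$, for every $S\subseteq P$ with $\bigwedge e_X[S]$ existing in $X$ we have $\iota_X(\bigwedge e_X[S])=\bigwedge\iota_X\circ e_X[S]$, and for every $T\subseteq P$ with $\bigvee e_Y[T]$ existing in $Y$ we have $\iota_Y(\bigvee e_Y[T])=\bigvee\iota_Y\circ e_Y[T]$. *)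

theory Defs
  imports Main
begin

definition is_poset :: "'a set \<Rightarrow> ('a \<Rightarrow> 'a \<Rightarrow> bool) \<Rightarrow> bool" where
  "is_poset A le \<longleftrightarrow>
     (\<forall>x\<in>A. le x x) \<and>
     (\<forall>x\<in>A. \<forall>y\<in>A. le x y \<and> le y x \<longrightarrow> x = y) \<and>
     (\<forall>x\<in>A. \<forall>y\<in>A. \<forall>z\<in>A. le x y \<and> le y z \<longrightarrow> le x z)"

definition is_quasiorder :: "'a set \<Rightarrow> ('a \<Rightarrow> 'a \<Rightarrow> bool) \<Rightarrow> bool" where
  "is_quasiorder A le \<longleftrightarrow>
     (\<forall>x\<in>A. le x x) \<and>
     (\<forall>x\<in>A. \<forall>y\<in>A. \<forall>z\<in>A. le x y \<and> le y z \<longrightarrow> le x z)"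

definition is_glb :: "'a set \<Rightarrow> ('a \<Rightarrow> 'a \<Rightarrow> bool) \<Rightarrow> 'a set \<Rightarrow> 'a \<Rightarrow> bool" where
  "is_glb A le S m \<longleftrightarrow> m \<in> A \<and> (\<forall>s\<in>S. le m s) \<and>
     (\<forall>z\<in>A. (\<forall>s\<in>S. le z s) \<longrightarrow> le z m)"

definition is_lub :: "'a set \<Rightarrow> ('a \<Rightarrow> 'a \<Rightarrow> bool) \<Rightarrow> 'a set \<Rightarrow> 'a \<Rightarrow> bool" where
  "is_lub A le S m \<longleftrightarrow> m \<in> A \<and> (\<forall>s\<in>S. le s m) \<and>
     (\<forall>z\<in>A. (\<forall>s\<in>S. le s z) \<longrightarrow> le m z)"

definition order_embedding ::
  "'a set \<Rightarrow> ('a \<Rightarrow> 'a \<Rightarrow> bool) \<Rightarrow> 'b set \<Rightarrow> ('b \<Rightarrow> 'b \<Rightarrow> bool) \<Rightarrow> ('a \<Rightarrow> 'b) \<Rightarrow> bool" where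
  "order_embedding A leA B leB f \<longleftrightarrow>
     f ` A \<subseteq> B \<and> (\<forall>x\<in>A. \<forall>y\<in>A. leA x y \<longleftrightarrow> leB (f x) (f y))"

definition is_upset :: "'p::order set \<Rightarrow> bool" where
  "is_upset U \<longleftrightarrow> (\<forall>p\<in>U. \<forall>q. p \<le> q \<longrightarrow> q \<in> U)"

definition is_downset :: "'p::order set \<Rightarrow> bool" where
  "is_downset D \<longleftrightarrow> (\<forall>p\<in>D. \<forall>q. q \<le> p \<longrightarrow> q \<in> D)"

definition up :: "'p::order \<Rightarrow> 'p set" where
  "up p = {q. p \<le> q}"

definition down :: "'p::order \<Rightarrow> 'p set" where
  "down p = {q. q \<le> p}"

definition standard_upsets :: "'p::order set set \<Rightarrow> bool" where
  "standard_upsets F \<longleftrightarrow> (\<forall>U\<in>F. is_upset U) \<and> (\<forall>p. up p \<in> F)"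

definition standard_downsets :: "'p::order set set \<Rightarrow> bool" where
  "standard_downsets I \<longleftrightarrow> (\<forall>D\<in>I. is_downset D) \<and> (\<forall>p. down p \<in> I)"

definition completion :: "('p::order \<Rightarrow> 'c::complete_lattice) \<Rightarrow> bool" where
  "completion e \<longleftrightarrow> (\<forall>p q. p \<le> q \<longleftrightarrow> e p \<le> e q)"

definition canonical_extension ::
  "'p::order set set \<Rightarrow> 'p set set \<Rightarrow> ('p \<Rightarrow> 'c::complete_lattice) \<Rightarrow> bool" where
  "canonical_extension F I e \<longleftrightarrow>
     completion e \<and>
     (\<forall>z. z = Sup {Inf (e ` U) | U. U \<in> F \<and> Inf (e ` U) \<le> z} \<and>
          z = Inf {Sup (e ` D) | D. D \<in> I \<and> z \<le> Sup (e ` D)}) \<and>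
     (\<forall>U\<in>F. \<forall>D\<in>I. Inf (e ` U) \<le> Sup (e ` D) \<longrightarrow> U \<inter> D \<noteq> {})"

definition meet_extension ::
  "('p::order \<Rightarrow> 'x) \<Rightarrow> 'x set \<Rightarrow> ('x \<Rightarrow> 'x \<Rightarrow> bool) \<Rightarrow> bool" where
  "meet_extension e X le \<longleftrightarrow>
     is_poset X le \<and> order_embedding UNIV (\<le>) X le e \<and>
     (\<forall>x\<in>X. is_glb X le (e ` {p. le x (e p)}) x)"

definition join_extension ::
  "('p::order \<Rightarrow> 'y) \<Rightarrow> 'y set \<Rightarrow> ('y \<Rightarrow> 'y \<Rightarrow> bool) \<Rightarrow> bool" where
  "join_extension e Y le \<longleftrightarrow>
     is_poset Y le \<and> order_embedding UNIV (\<le>) Y le e \<and>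
     (\<forall>y\<in>Y. is_lub Y le (e ` {p. le (e p) y}) y)"

text \<open>The poset induced by a quasiorder q on a carrier D: equivalence classes,
  ordered by q between representatives.\<close>
definition qclass :: "'a set \<Rightarrow> ('a \<Rightarrow> 'a \<Rightarrow> bool) \<Rightarrow> 'a \<Rightarrow> 'a set" where
  "qclass D q a = {b \<in> D. q a b \<and> q b a}"

definition qcarrier :: "'a set \<Rightarrow> ('a \<Rightarrow> 'a \<Rightarrow> bool) \<Rightarrow> 'a set set" where
  "qcarrier D q = qclass D q ` D"

definition qle :: "('a \<Rightarrow> 'a \<Rightarrow> bool) \<Rightarrow> 'a set \<Rightarrow> 'a set \<Rightarrow> bool" where
  "qle q A B \<longleftrightarrow> (\<exists>a\<in>A. \<exists>b\<in>B. q a b)"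

text \<open>X and Y are made disjoint by tagging with Inl / Inr; the carrier of
  the disjoint union X \<uplus> Y is Inl ` X \<union> Inr ` Y.\<close>
definition galois_polarity ::
  "('p::order \<Rightarrow> 'x) \<Rightarrow> 'x set \<Rightarrow> ('x \<Rightarrow> 'x \<Rightarrow> bool) \<Rightarrow>
   ('p \<Rightarrow> 'y) \<Rightarrow> 'y set \<Rightarrow> ('y \<Rightarrow> 'y \<Rightarrow> bool) \<Rightarrow> ('x \<times> 'y) set \<Rightarrow> bool" where
  "galois_polarity eX X leX eY Y leY R \<longleftrightarrow>
     meet_extension eX X leX \<and> join_extension eY Y leY \<and> R \<subseteq> X \<times> Y \<and>
     (\<exists>q :: ('x + 'y) \<Rightarrow> ('x + 'y) \<Rightarrow> bool.
        let D = Inl ` X \<union> Inr ` Y;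
            Q = qcarrier D q;
            iX = (\<lambda>x. qclass D q (Inl x));
            iY = (\<lambda>y. qclass D q (Inr y))
        in is_quasiorder D q \<and>
           (\<forall>x\<in>X. \<forall>y\<in>Y. q (Inl x) (Inr y) \<longleftrightarrow> (x, y) \<in> R) \<and>
           order_embedding X leX Q (qle q) iX \<and>
           order_embedding Y leY Q (qle q) iY \<and>
           (\<forall>p. iX (eX p) = iY (eY p)) \<and>
           (\<forall>S m. is_glb X leX (eX ` S) m \<longrightarrow> is_glb Q (qle q) ((iX \<circ> eX) ` S) (iX m)) \<and>
           (\<forall>T m. is_lub Y leY (eY ` T) m \<longrightarrow> is_lub Q (qle q) ((iY \<circ> eY) ` T) (iY m)))"

end

theory Submission
  imports Defs
begin

text \<open>Realize an upset \<open>U \<in> F\<close> as the closed element \<open>\<Sqinter>e[U]\<close> and a downset \<open>D \<in> I\<close> as the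
  open element \<open>\<Squnion>e[D]\<close> of \<open>C\<close>. Compactness of \<open>e\<close> makes both realizations order-embeddings
  and turns \<open>\<Sqinter>e[U] \<le> \<Squnion>e[D]\<close> into \<open>U \<inter> D \<noteq> {}\<close>, so the quasiorder pulled back from \<open>C\<close>
  witnesses the polarity. A meet in \<open>F\<close> of principal upsets \<open>up p\<close>, \<open>p \<in> S\<close>, is realized as the
  meet of \<open>e[S]\<close> among the closed and open elements: an open element \<open>\<Squnion>e[D]\<close> below \<open>e[S]\<close>
  has every \<open>d \<in> D\<close> below \<open>S\<close>, so \<open>up d\<close> is a lower bound of the \<open>up p\<close> in \<open>F\<close>.\<close>

lemma up_subset_up_iff: "up q \<subseteq> up p \<longleftrightarrow> (p::'p::order) \<le> q"
  unfolding up_def by auto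

lemma down_subset_down_iff: "down p \<subseteq> down q \<longleftrightarrow> (p::'p::order) \<le> q"
  unfolding down_def by auto

lemma up_subset_iff_mem: "is_upset U \<Longrightarrow> up p \<subseteq> U \<longleftrightarrow> p \<in> U"
  unfolding is_upset_def up_def by auto

lemma down_subset_iff_mem: "is_downset D \<Longrightarrow> down p \<subseteq> D \<longleftrightarrow> p \<in> D"
  unfolding is_downset_def down_def by auto

lemma meet_extension_up:
  assumes "standard_upsets F"
  shows "meet_extension up F (\<lambda>U V. V \<subseteq> U)"
  using assms unfolding standard_upsets_def meet_extension_def is_poset_def
    order_embedding_def is_glb_def
  by (auto simp: up_subset_iff_mem up_subset_up_iff)

lemma join_extension_down:
  assumes "standard_downsets I"
  shows "join_extension down I (\<lambda>A B. A \<subseteq> B)"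
  using assms unfolding standard_downsets_def join_extension_def is_poset_def
    order_embedding_def is_lub_def
  by (auto simp: down_subset_iff_mem down_subset_down_iff)

definition pullback :: "('a \<Rightarrow> 'c::order) \<Rightarrow> 'a \<Rightarrow> 'a \<Rightarrow> bool" where
  "pullback f a b \<longleftrightarrow> f a \<le> f b"

lemma is_quasiorder_pullback: "is_quasiorder D (pullback f)"
  unfolding is_quasiorder_def pullback_def by auto

lemma qclass_pullback: "qclass D (pullback f) a = {b \<in> D. f b = f a}"
  unfolding qclass_def pullback_def by (auto intro: order.antisym)

lemma qclass_pullback_eqI: "f a = f b \<Longrightarrow> qclass D (pullback f) a = qclass D (pullback f) b"
  by (simp add: qclass_pullback)

lemma qle_qclass_pullback_iff:
  assumes "a \<in> D" "b \<in> D"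
  shows "qle (pullback f) (qclass D (pullback f) a) (qclass D (pullback f) b) \<longleftrightarrow> f a \<le> f b"
  using assms unfolding qle_def qclass_pullback pullback_def by auto

lemma order_embedding_qclass_pullback:
  assumes "h ` X \<subseteq> D" and "\<And>x y. x \<in> X \<Longrightarrow> y \<in> X \<Longrightarrow> le x y \<longleftrightarrow> f (h x) \<le> f (h y)"
  shows "order_embedding X le (qcarrier D (pullback f)) (qle (pullback f))
           (\<lambda>x. qclass D (pullback f) (h x))"
  using assms unfolding order_embedding_def qcarrier_def
  by (auto simp: image_subset_iff qle_qclass_pullback_iff)

lemma is_glb_qclass_pullback:
  assumes "a \<in> D" "T \<subseteq> D" "is_glb (f ` D) (\<le>) (f ` T) (f a)"
  shows "is_glb (qcarrier D (pullback f)) (qle (pullback f))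
           (qclass D (pullback f) ` T) (qclass D (pullback f) a)"
proof -
  have "qle (pullback f) (qclass D (pullback f) b) (qclass D (pullback f) t) \<longleftrightarrow> f b \<le> f t"
    if "b \<in> D" "t \<in> D" for b t
    using that by (rule qle_qclass_pullback_iff)
  with assms show ?thesis
    unfolding is_glb_def qcarrier_def by (auto simp: subset_eq)
qed

lemma is_lub_qclass_pullback:
  assumes "a \<in> D" "T \<subseteq> D" "is_lub (f ` D) (\<le>) (f ` T) (f a)"
  shows "is_lub (qcarrier D (pullback f)) (qle (pullback f))
           (qclass D (pullback f) ` T) (qclass D (pullback f) a)"
proof -
  have "qle (pullback f) (qclass D (pullback f) t) (qclass D (pullback f) b) \<longleftrightarrow> f t \<le> f b"
    if "t \<in> D" "b \<in> D" for b t
    using that by (rule qle_qclass_pullback_iff)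
  with assms show ?thesis
    unfolding is_lub_def qcarrier_def by (auto simp: subset_eq)
qed

locale compact_completion =
  fixes F I :: "'p::order set set" and e :: "'p \<Rightarrow> 'c::complete_lattice"
  assumes standard_upsets: "standard_upsets F"
    and standard_downsets: "standard_downsets I"
    and completion: "completion e"
    and compact: "\<And>U D. U \<in> F \<Longrightarrow> D \<in> I \<Longrightarrow> Inf (e ` U) \<le> Sup (e ` D) \<Longrightarrow> U \<inter> D \<noteq> {}"
begin

lemma up_in_F: "up p \<in> F" and mem_F_is_upset: "U \<in> F \<Longrightarrow> is_upset U"
  using standard_upsets unfolding standard_upsets_def by auto

lemma down_in_I: "down p \<in> I" and mem_I_is_downset: "D \<in> I \<Longrightarrow> is_downset D"
  using standard_downsets unfolding standard_downsets_def by auto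

lemma le_iff: "e p \<le> e q \<longleftrightarrow> p \<le> q"
  using completion unfolding completion_def by blast

lemma Inf_up: "Inf (e ` up p) = e p"
  by (rule order.antisym) (auto simp: up_def le_iff intro: INF_lower INF_greatest)

lemma Sup_down: "Sup (e ` down p) = e p"
  by (rule order.antisym) (auto simp: down_def le_iff intro: SUP_upper SUP_least)

lemma Inf_le_Sup_iff: "U \<in> F \<Longrightarrow> D \<in> I \<Longrightarrow> Inf (e ` U) \<le> Sup (e ` D) \<longleftrightarrow> U \<inter> D \<noteq> {}"
  using compact by (blast intro: INF_lower SUP_upper order.trans)

lemma Inf_le_Inf_iff:
  assumes "U \<in> F" "V \<in> F"
  shows "Inf (e ` U) \<le> Inf (e ` V) \<longleftrightarrow> V \<subseteq> U"
proof
  assume le: "Inf (e ` U) \<le> Inf (e ` V)"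
  show "V \<subseteq> U"
  proof
    fix v assume "v \<in> V"
    then have "Inf (e ` U) \<le> Sup (e ` down v)"
      using le by (metis INF_lower Sup_down order.trans)
    then obtain u where "u \<in> U" "u \<le> v"
      using Inf_le_Sup_iff[OF \<open>U \<in> F\<close> down_in_I] by (auto simp: down_def)
    then show "v \<in> U"
      using mem_F_is_upset[OF \<open>U \<in> F\<close>] unfolding is_upset_def by blast
  qed
qed (rule INF_superset_mono, simp_all)

lemma Sup_le_Sup_iff:
  assumes "U \<in> I" "V \<in> I"
  shows "Sup (e ` U) \<le> Sup (e ` V) \<longleftrightarrow> U \<subseteq> V"
proof
  assume le: "Sup (e ` U) \<le> Sup (e ` V)"
  show "U \<subseteq> V"
  proof
    fix u assume "u \<in> U"
    then have "Inf (e ` up u) \<le> Sup (e ` V)"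
      using le by (metis SUP_upper Inf_up order.trans)
    then obtain v where "v \<in> V" "u \<le> v"
      using Inf_le_Sup_iff[OF up_in_F \<open>V \<in> I\<close>] by (auto simp: up_def)
    then show "u \<in> V"
      using mem_I_is_downset[OF \<open>V \<in> I\<close>] unfolding is_downset_def by blast
  qed
qed (rule SUP_subset_mono, simp_all)

definition realize :: "'p set + 'p set \<Rightarrow> 'c" where
  "realize = case_sum (\<lambda>U. Inf (e ` U)) (\<lambda>D. Sup (e ` D))"

lemma realize_simps [simp]: "realize (Inl U) = Inf (e ` U)" "realize (Inr D) = Sup (e ` D)"
  unfolding realize_def by simp_all

lemma realize_image:
  "realize ` (Inl ` F \<union> Inr ` I) = (\<lambda>U. Inf (e ` U)) ` F \<union> (\<lambda>D. Sup (e ` D)) ` I"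
  by (auto simp: image_Un image_image)

lemma is_glb_Inf_if_is_glb_ups:
  assumes glb: "is_glb F (\<lambda>U V. V \<subseteq> U) (up ` S) m"
  shows "is_glb ((\<lambda>U. Inf (e ` U)) ` F \<union> (\<lambda>D. Sup (e ` D)) ` I) (\<le>) (e ` S) (Inf (e ` m))"
proof -
  have m: "m \<in> F" and ups_le: "\<And>s. s \<in> S \<Longrightarrow> up s \<subseteq> m"
    and least: "\<And>U. U \<in> F \<Longrightarrow> (\<forall>s\<in>S. up s \<subseteq> U) \<Longrightarrow> m \<subseteq> U"
    using glb unfolding is_glb_def by auto
  have "Inf (e ` m) \<le> e s" if "s \<in> S" for s
    using ups_le[OF that] Inf_le_Inf_iff[OF m up_in_F] by (simp add: Inf_up)
  moreover have "Inf (e ` U) \<le> Inf (e ` m)" if "U \<in> F" "\<forall>s\<in>S. Inf (e ` U) \<le> e s" for U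
    using that least[OF \<open>U \<in> F\<close>] Inf_le_Inf_iff[OF \<open>U \<in> F\<close> up_in_F]
      Inf_le_Inf_iff[OF \<open>U \<in> F\<close> m]
    by (simp add: Inf_up)
  moreover have "Sup (e ` D) \<le> Inf (e ` m)" if "D \<in> I" "\<forall>s\<in>S. Sup (e ` D) \<le> e s" for D
  proof (rule SUP_least)
    fix d assume "d \<in> D"
    then have "\<forall>s\<in>S. d \<le> s"
      using that(2) by (metis SUP_upper le_iff order.trans)
    then have "m \<subseteq> up d"
      using least[OF up_in_F] by (simp add: up_subset_up_iff)
    then show "e d \<le> Inf (e ` m)"
      using Inf_le_Inf_iff[OF up_in_F m] by (simp add: Inf_up)
  qed
  ultimately show ?thesis
    using m unfolding is_glb_def by auto
qed

lemma is_lub_Sup_if_is_lub_downs: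
  assumes lub: "is_lub I (\<lambda>A B. A \<subseteq> B) (down ` T) m"
  shows "is_lub ((\<lambda>U. Inf (e ` U)) ` F \<union> (\<lambda>D. Sup (e ` D)) ` I) (\<le>) (e ` T) (Sup (e ` m))"
proof -
  have m: "m \<in> I" and downs_le: "\<And>t. t \<in> T \<Longrightarrow> down t \<subseteq> m"
    and least: "\<And>D. D \<in> I \<Longrightarrow> (\<forall>t\<in>T. down t \<subseteq> D) \<Longrightarrow> m \<subseteq> D"
    using lub unfolding is_lub_def by auto
  have "e t \<le> Sup (e ` m)" if "t \<in> T" for t
    using downs_le[OF that] Sup_le_Sup_iff[OF down_in_I m] by (simp add: Sup_down)
  moreover have "Sup (e ` m) \<le> Sup (e ` D)" if "D \<in> I" "\<forall>t\<in>T. e t \<le> Sup (e ` D)" for D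
    using that least[OF \<open>D \<in> I\<close>] Sup_le_Sup_iff[OF down_in_I \<open>D \<in> I\<close>]
      Sup_le_Sup_iff[OF m \<open>D \<in> I\<close>]
    by (simp add: Sup_down)
  moreover have "Sup (e ` m) \<le> Inf (e ` U)" if "U \<in> F" "\<forall>t\<in>T. e t \<le> Inf (e ` U)" for U
  proof (rule SUP_least)
    fix d assume "d \<in> m"
    show "e d \<le> Inf (e ` U)"
    proof (rule INF_greatest)
      fix u assume "u \<in> U"
      then have "\<forall>t\<in>T. t \<le> u"
        using that(2) by (metis INF_lower le_iff order.trans)
      then have "m \<subseteq> down u"
        using least[OF down_in_I] by (simp add: down_subset_down_iff)
      then show "e d \<le> e u"
        using \<open>d \<in> m\<close> by (auto simp: down_def le_iff)
    qed
  qed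
  ultimately show ?thesis
    using m unfolding is_lub_def by auto
qed

abbreviation upsets_downsets :: "('p set + 'p set) set" where
  "upsets_downsets \<equiv> Inl ` F \<union> Inr ` I"

abbreviation realize_class :: "'p set + 'p set \<Rightarrow> ('p set + 'p set) set" where
  "realize_class \<equiv> qclass upsets_downsets (pullback realize)"

lemma pullback_realize_Inl_Inr_iff:
  assumes "U \<in> F" "D \<in> I"
  shows "pullback realize (Inl U) (Inr D) \<longleftrightarrow> {p. up p \<subseteq> U} \<inter> {p. down p \<subseteq> D} \<noteq> {}"
  using assms mem_F_is_upset mem_I_is_downset
  by (simp add: pullback_def Inf_le_Sup_iff up_subset_iff_mem down_subset_iff_mem)

lemma order_embedding_realize_class_Inl:
  "order_embedding F (\<lambda>U V. V \<subseteq> U) (qcarrier upsets_downsets (pullback realize)) (qle (pullback realize))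
     (\<lambda>U. realize_class (Inl U))"
  by (rule order_embedding_qclass_pullback) (auto simp: Inf_le_Inf_iff)

lemma order_embedding_realize_class_Inr:
  "order_embedding I (\<lambda>A B. A \<subseteq> B) (qcarrier upsets_downsets (pullback realize)) (qle (pullback realize))
     (\<lambda>D. realize_class (Inr D))"
  by (rule order_embedding_qclass_pullback) (auto simp: Sup_le_Sup_iff)

lemma realize_class_up_eq_down: "realize_class (Inl (up p)) = realize_class (Inr (down p))"
  by (rule qclass_pullback_eqI) (simp add: Inf_up Sup_down)

lemma is_glb_realize_class:
  assumes "is_glb F (\<lambda>U V. V \<subseteq> U) (up ` S) m"
  shows "is_glb (qcarrier upsets_downsets (pullback realize)) (qle (pullback realize))
           (((\<lambda>U. realize_class (Inl U)) \<circ> up) ` S) (realize_class (Inl m))"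
proof -
  have "realize ` Inl ` up ` S = e ` S"
    by (auto simp: image_image Inf_up)
  with assms have "is_glb (realize ` upsets_downsets) (\<le>) (realize ` Inl ` up ` S) (realize (Inl m))"
    using is_glb_Inf_if_is_glb_ups by (simp add: realize_image)
  moreover have "m \<in> F"
    using assms unfolding is_glb_def by blast
  ultimately have "is_glb (qcarrier upsets_downsets (pullback realize)) (qle (pullback realize))
      (realize_class ` Inl ` up ` S) (realize_class (Inl m))"
    by (intro is_glb_qclass_pullback) (auto intro: up_in_F)
  then show ?thesis
    by (simp add: image_comp)
qed

lemma is_lub_realize_class:
  assumes "is_lub I (\<lambda>A B. A \<subseteq> B) (down ` T) m"
  shows "is_lub (qcarrier upsets_downsets (pullback realize)) (qle (pullback realize))
           (((\<lambda>D. realize_class (Inr D)) \<circ> down) ` T) (realize_class (Inr m))"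
proof -
  have "realize ` Inr ` down ` T = e ` T"
    by (auto simp: image_image Sup_down)
  with assms have "is_lub (realize ` upsets_downsets) (\<le>) (realize ` Inr ` down ` T) (realize (Inr m))"
    using is_lub_Sup_if_is_lub_downs by (simp add: realize_image)
  moreover have "m \<in> I"
    using assms unfolding is_lub_def by blast
  ultimately have "is_lub (qcarrier upsets_downsets (pullback realize)) (qle (pullback realize))
      (realize_class ` Inr ` down ` T) (realize_class (Inr m))"
    by (intro is_lub_qclass_pullback) (auto intro: down_in_I)
  then show ?thesis
    by (simp add: image_comp)
qed

end

theorem mainTheorem8:
  fixes F I :: "'p::order set set"
  assumes "standard_upsets F"
    and "standard_downsets I"
    and "\<exists>e :: 'p \<Rightarrow> 'c::complete_lattice. canonical_extension F I e"
  shows "galois_polarity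
           up F (\<lambda>U V. V \<subseteq> U)
           down I (\<lambda>A B. A \<subseteq> B)
           {(U, D). U \<in> F \<and> D \<in> I \<and>
              {p. up p \<subseteq> U} \<inter> {p. down p \<subseteq> D} \<noteq> {}}"
proof -
  obtain e :: "'p \<Rightarrow> 'c" where "canonical_extension F I e"
    using assms(3) by blast
  with assms(1,2) interpret compact_completion F I e
    by unfold_locales (auto simp: canonical_extension_def)
  show ?thesis
    unfolding galois_polarity_def Let_def
    using meet_extension_up[OF assms(1)] join_extension_down[OF assms(2)]
      is_quasiorder_pullback pullback_realize_Inl_Inr_iff
      order_embedding_realize_class_Inl order_embedding_realize_class_Inr
      realize_class_up_eq_down is_glb_realize_class is_lub_realize_class
    by (intro conjI exI[of _ "pullback realize"]) auto
qed

end
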